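(* Let $\lambda=\frac{10}{9}e^{\frac{2}{3}\pi i}$ and let $F$ be the PMT with regions $R_1=\{z:|z|<\tfrac12\}$, $R_2=\widehat{\mathbb C}\setminus\overline{R_1}$ and component functions $f_1(z)=e^{\frac23\pi i}z$, $f_2(z)=\lambda(1-z)$. Then $0$ is an elliptic fixed point with $R_1$ a rotation domain, $z_0=\frac{\lambda}{\lambda+1}$ is a repelling fixed point, $\alpha(F)=\{z_0\}$, and $F$ is $\alpha$-expanding but not hyperbolic.
   Context: A PMT is a pair $(\{R_k\}_{k=1}^K,F)$ with $R_k$ nonempty, open, connected, pairwise disjoint subsets of $\widehat{\mathbb C}$ bounded by piecewise smooth simple closed curves and with $\bigcup\overline{R_k}=\widehat{\mathbb C}$, and $F|_{R_k}=f_k|_{R_k}$ for Möbius maps $f_k$, $F$ undefined on $B(F)=\bigcup\partial R_k$. $F^{-n}(A)$ is the set of $z$ with $F^j(z)\in R(F)=\bigcup R_k$ for $j<n$ and $F^n(z)\in A$; $\mathcal B(F)=\overline{\bigcup_{n\ge0}F^{-n}(B(F))}$, $\alpha(F)=\mathcal B(F)\setminus\bigcup_{n\ge0}F^{-n}(B(F))$. Periodic point $z$ of period $n$: orbit in $R(F)$, $F^n(z)=z$; classified by the multiplier $m$ of the Möbius composition $M_z=f_{k_n}\circ\cdots\circ f_{k_1}$ along the orbit: identity type if $F^n=\mathrm{id}$ near $z$, otherwise attracting $|m|<1$, repelling $|m|>1$, elliptic $|m|=1,m\ne1$, parabolic $m=1$. A rotation domain is a periodic regular component on which $F^n$ is an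 elliptic Möbius map. $F$ is hyperbolic if it has an attracting periodic point, no elliptic, parabolic or identity periodic points, no ghost-periodic points and no wandering regular components. $F$ is $\alpha$-expanding if there is $N\ge1$ with $|(F^N)'(z)|_s>1$ for all $z\in\alpha(F)$, where $|\cdot|_s$ is the spherical derivative norm and $(F^N)'(z)$ is the derivative at $z$ of the Möbius composition along the orbit of $z$. *)

theory Defs
  imports "HOL-Analysis.Analysis"
begin

text \<open>The Riemann sphere is modelled as complex option: Some z is the finite point z,
  None is the point at infinity.\<close>

type_synonym sphere = "complex option"

definition sphere_open :: "sphere set \<Rightarrow> bool" where
  "sphere_open S \<longleftrightarrow> open {z. Some z \<in> S} \<and>
     (None \<in> S \<longrightarrow> (\<exists>r. \<forall>z. norm z > r \<longrightarrow> Some z \<in> S))"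

definition sphere_top :: "sphere topology" where
  "sphere_top = topology sphere_open"

lemma istopology_sphere_open: "istopology sphere_open"
  unfolding istopology_def
proof (intro conjI allI impI ballI)
  fix S T assume S: "sphere_open S" and T: "sphere_open T"
  show "sphere_open (S \<inter> T)"
  proof -
    have "{z. Some z \<in> S \<inter> T} = {z. Some z \<in> S} \<inter> {z. Some z \<in> T}" by auto
    moreover have "None \<in> S \<inter> T \<longrightarrow> (\<exists>r. \<forall>z. norm z > r \<longrightarrow> Some z \<in> S \<inter> T)"
    proof
      assume "None \<in> S \<inter> T"
      then obtain r1 r2 where "\<forall>z. norm z > r1 \<longrightarrow> Some z \<in> S" "\<forall>z. norm z > r2 \<longrightarrow> Some z \<in> T"
        using S T unfolding sphere_open_def by blast
      then show "\<exists>r. \<forall>z. norm z > r \<longrightarrow> Some z \<in> S \<inter> T"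
        by (intro exI[of _ "max r1 r2"]) auto
    qed
    ultimately show ?thesis using S T unfolding sphere_open_def by auto
  qed
next
  fix K assume K: "\<forall>S\<in>K. sphere_open S"
  have "{z. Some z \<in> \<Union>K} = (\<Union>S\<in>K. {z. Some z \<in> S})" by auto
  moreover have "open (\<Union>S\<in>K. {z. Some z \<in> S})" using K unfolding sphere_open_def by auto
  moreover have "None \<in> \<Union>K \<longrightarrow> (\<exists>r. \<forall>z. norm z > r \<longrightarrow> Some z \<in> \<Union>K)"
    using K unfolding sphere_open_def by blast
  ultimately show "sphere_open (\<Union>K)" unfolding sphere_open_def by simp
qed

lemma openin_sphere_top: "openin sphere_top S \<longleftrightarrow> sphere_open S"
  unfolding sphere_top_def using istopology_sphere_open by (simp add: topology_inverse')

text \<open>A Moebius map is represented by a coefficient quadruple (a,b,c,d) with ad - bc \<noteq> 0,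
  acting by z \<mapsto> (az+b)/(cz+d) on the sphere.\<close>

type_synonym moeb = "complex \<times> complex \<times> complex \<times> complex"

fun moeb_det :: "moeb \<Rightarrow> complex" where
  "moeb_det (a, b, c, d) = a * d - b * c"

fun moeb_app :: "moeb \<Rightarrow> sphere \<Rightarrow> sphere" where
  "moeb_app (a, b, c, d) (Some z) = (if c * z + d = 0 then None else Some ((a * z + b) / (c * z + d)))"
| "moeb_app (a, b, c, d) None = (if c = 0 then None else Some (a / c))"

text \<open>Composition: moeb_comp M N represents M \<circ> N (matrix product).\<close>
fun moeb_comp :: "moeb \<Rightarrow> moeb \<Rightarrow> moeb" where
  "moeb_comp (a, b, c, d) (a', b', c', d') =
     (a * a' + b * c', a * b' + b * d', c * a' + d * c', c * b' + d * d')"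

definition moeb_id :: moeb where "moeb_id = (1, 0, 0, 1)"

text \<open>Complex derivative of a Moebius map at a point, computed in the standard charts
  (identity chart at finite points, u \<mapsto> 1/u at infinity) at the source and at the image.\<close>
fun moeb_loc_deriv :: "moeb \<Rightarrow> sphere \<Rightarrow> complex" where
  "moeb_loc_deriv (a, b, c, d) (Some z) =
     (if c * z + d = 0 then deriv (\<lambda>w. (c * w + d) / (a * w + b)) z
      else deriv (\<lambda>w. (a * w + b) / (c * w + d)) z)"
| "moeb_loc_deriv (a, b, c, d) None =
     (if c = 0 then deriv (\<lambda>u. (c + d * u) / (a + b * u)) 0
      else deriv (\<lambda>u. (a + b * u) / (c + d * u)) 0)"

text \<open>Chart coordinate of a point (0 for infinity, in the chart u \<mapsto> 1/u).\<close>
fun coord :: "sphere \<Rightarrow> complex" where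
  "coord (Some z) = z"
| "coord None = 0"

definition sph_deriv :: "moeb \<Rightarrow> sphere \<Rightarrow> real" where
  "sph_deriv M z = norm (moeb_loc_deriv M z) * (1 + (norm (coord z))\<^sup>2)
                     / (1 + (norm (coord (moeb_app M z)))\<^sup>2)"

definition moeb_multiplier :: "moeb \<Rightarrow> sphere \<Rightarrow> complex" where
  "moeb_multiplier M z = moeb_loc_deriv M z"

text \<open>Elliptic Moebius map: not the identity and conjugate to a rotation, i.e.
  trace^2/det is real and lies in [0,4).\<close>
fun moeb_elliptic :: "moeb \<Rightarrow> bool" where
  "moeb_elliptic (a, b, c, d) \<longleftrightarrow> a * d - b * c \<noteq> 0 \<and>
     (\<exists>t::real. (a + d)\<^sup>2 / (a * d - b * c) = complex_of_real t \<and> 0 \<le> t \<and> t < 4)"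

type_synonym pmt = "(sphere set \<times> moeb) list"

definition pmt_R :: "pmt \<Rightarrow> sphere set" where
  "pmt_R F = (\<Union>k<length F. fst (F ! k))"

definition pmt_B :: "pmt \<Rightarrow> sphere set" where
  "pmt_B F = (\<Union>k<length F. sphere_top frontier_of (fst (F ! k)))"

definition pmt_idx :: "pmt \<Rightarrow> sphere \<Rightarrow> nat" where
  "pmt_idx F w = (THE k. k < length F \<and> w \<in> fst (F ! k))"

definition pmt_map :: "pmt \<Rightarrow> sphere \<Rightarrow> moeb" where
  "pmt_map F w = snd (F ! pmt_idx F w)"

definition pmt_step :: "pmt \<Rightarrow> sphere \<Rightarrow> sphere option" where
  "pmt_step F w = (if w \<in> pmt_R F then Some (moeb_app (pmt_map F w) w) else None)"

fun pmt_iter :: "pmt \<Rightarrow> nat \<Rightarrow> sphere \<Rightarrow> sphere option" where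
  "pmt_iter F 0 z = Some z"
| "pmt_iter F (Suc n) z = (case pmt_iter F n z of None \<Rightarrow> None | Some w \<Rightarrow> pmt_step F w)"

definition pmt_preim :: "pmt \<Rightarrow> nat \<Rightarrow> sphere set \<Rightarrow> sphere set" where
  "pmt_preim F n A = {z. \<exists>w\<in>A. pmt_iter F n z = Some w}"

definition pmt_img :: "pmt \<Rightarrow> nat \<Rightarrow> sphere set \<Rightarrow> sphere set" where
  "pmt_img F n U = {w. \<exists>z\<in>U. pmt_iter F n z = Some w}"

definition pmt_calB :: "pmt \<Rightarrow> sphere set" where
  "pmt_calB F = sphere_top closure_of (\<Union>n. pmt_preim F n (pmt_B F))"

definition pmt_alpha :: "pmt \<Rightarrow> sphere set" where
  "pmt_alpha F = pmt_calB F - (\<Union>n. pmt_preim F n (pmt_B F))"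

fun pmt_orbit_moeb :: "pmt \<Rightarrow> nat \<Rightarrow> sphere \<Rightarrow> moeb" where
  "pmt_orbit_moeb F 0 z = moeb_id"
| "pmt_orbit_moeb F (Suc n) z = moeb_comp (pmt_map F (the (pmt_iter F n z))) (pmt_orbit_moeb F n z)"

definition orbit_in_R :: "pmt \<Rightarrow> nat \<Rightarrow> sphere \<Rightarrow> bool" where
  "orbit_in_R F n z \<longleftrightarrow> (\<forall>j<n. \<exists>w. pmt_iter F j z = Some w \<and> w \<in> pmt_R F)"

definition periodic_point :: "pmt \<Rightarrow> sphere \<Rightarrow> nat \<Rightarrow> bool" where
  "periodic_point F z n \<longleftrightarrow> n \<ge> 1 \<and> orbit_in_R F n z \<and> pmt_iter F n z = Some z \<and>
     (\<forall>m. 1 \<le> m \<and> m < n \<longrightarrow> pmt_iter F m z \<noteq> Some z)"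

definition pp_multiplier :: "pmt \<Rightarrow> sphere \<Rightarrow> nat \<Rightarrow> complex" where
  "pp_multiplier F z n = moeb_multiplier (pmt_orbit_moeb F n z) z"

definition identity_type :: "pmt \<Rightarrow> sphere \<Rightarrow> nat \<Rightarrow> bool" where
  "identity_type F z n \<longleftrightarrow> periodic_point F z n \<and>
     (\<exists>U. openin sphere_top U \<and> z \<in> U \<and> (\<forall>w\<in>U. pmt_iter F n w = Some w))"

definition attracting_pp :: "pmt \<Rightarrow> sphere \<Rightarrow> nat \<Rightarrow> bool" where
  "attracting_pp F z n \<longleftrightarrow> periodic_point F z n \<and> \<not> identity_type F z n \<and>
     norm (pp_multiplier F z n) < 1"

definition repelling_pp :: "pmt \<Rightarrow> sphere \<Rightarrow> nat \<Rightarrow> bool" where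
  "repelling_pp F z n \<longleftrightarrow> periodic_point F z n \<and> \<not> identity_type F z n \<and>
     norm (pp_multiplier F z n) > 1"

definition elliptic_pp :: "pmt \<Rightarrow> sphere \<Rightarrow> nat \<Rightarrow> bool" where
  "elliptic_pp F z n \<longleftrightarrow> periodic_point F z n \<and> \<not> identity_type F z n \<and>
     norm (pp_multiplier F z n) = 1 \<and> pp_multiplier F z n \<noteq> 1"

definition parabolic_pp :: "pmt \<Rightarrow> sphere \<Rightarrow> nat \<Rightarrow> bool" where
  "parabolic_pp F z n \<longleftrightarrow> periodic_point F z n \<and> \<not> identity_type F z n \<and>
     pp_multiplier F z n = 1"

text \<open>Ghost-periodic point (not defined in the given context):
  a point whose orbit, continued at points of B(F) by any of the maps of the adjacent
  regions (continuous extension from the closures), returns to it and meets B(F).\<close>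
definition ghost_periodic :: "pmt \<Rightarrow> sphere \<Rightarrow> bool" where
  "ghost_periodic F z \<longleftrightarrow> (\<exists>n\<ge>1. \<exists>ks::nat\<Rightarrow>nat. \<exists>zs::nat\<Rightarrow>sphere.
     zs 0 = z \<and> zs n = z \<and>
     (\<forall>j<n. ks j < length F \<and> zs j \<in> sphere_top closure_of (fst (F ! ks j)) \<and>
            zs (Suc j) = moeb_app (snd (F ! ks j)) (zs j)) \<and>
     (\<exists>j<n. zs j \<in> pmt_B F))"

definition regular_set :: "pmt \<Rightarrow> sphere set" where
  "regular_set F = UNIV - pmt_calB F"

definition regular_components :: "pmt \<Rightarrow> sphere set set" where
  "regular_components F = connected_components_of (subtopology sphere_top (regular_set F))"

definition wandering_component :: "pmt \<Rightarrow> sphere set \<Rightarrow> bool" where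
  "wandering_component F U \<longleftrightarrow> U \<in> regular_components F \<and>
     (\<forall>m n. m \<noteq> n \<longrightarrow> pmt_img F m U \<inter> pmt_img F n U = {})"

definition rotation_domain :: "pmt \<Rightarrow> sphere set \<Rightarrow> bool" where
  "rotation_domain F U \<longleftrightarrow> U \<in> regular_components F \<and>
     (\<exists>n\<ge>1. pmt_img F n U \<subseteq> U \<and> (\<forall>m. 1 \<le> m \<and> m < n \<longrightarrow> \<not> pmt_img F m U \<subseteq> U) \<and>
        (\<exists>M. moeb_elliptic M \<and> (\<forall>z\<in>U. pmt_iter F n z = Some (moeb_app M z))))"

definition pmt_hyperbolic :: "pmt \<Rightarrow> bool" where
  "pmt_hyperbolic F \<longleftrightarrow>
     (\<exists>z n. attracting_pp F z n) \<and>
     (\<forall>z n. \<not> elliptic_pp F z n \<and> \<not> parabolic_pp F z n \<and> \<not> identity_type F z n) \<and>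
     (\<forall>z. \<not> ghost_periodic F z) \<and>
     (\<forall>U. \<not> wandering_component F U)"

definition alpha_expanding :: "pmt \<Rightarrow> bool" where
  "alpha_expanding F \<longleftrightarrow>
     (\<exists>N\<ge>1. \<forall>z\<in>pmt_alpha F. sph_deriv (pmt_orbit_moeb F N z) z > 1)"

definition ex_omega :: complex where "ex_omega = exp (2/3 * pi * \<i>)"
definition ex_lambda :: complex where "ex_lambda = 10/9 * exp (2/3 * pi * \<i>)"

definition ex_R1 :: "sphere set" where "ex_R1 = {Some z | z. norm z < 1/2}"
definition ex_R2 :: "sphere set" where "ex_R2 = UNIV - sphere_top closure_of ex_R1"

text \<open>f_1(z) = e^{2\<pi>i/3} z,  f_2(z) = \<lambda>(1 - z) = (-\<lambda> z + \<lambda>)/1.\<close>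
definition ex_F :: pmt where
  "ex_F = [(ex_R1, (ex_omega, 0, 0, 1)), (ex_R2, (- ex_lambda, ex_lambda, 0, 1))]"

end

theory Submission imports Defs begin

text \<open>On the disc |z| < 1/2 the map is the rotation by e^{2\<pi>i/3}, so 0 is an elliptic fixed
  point, the disc is a rotation domain, and this elliptic point alone rules out hyperbolicity.
  Outside the closed disc F is the affine map f_2, which fixes z_0 and multiplies distances
  to z_0 by |\<lambda>| = 10/9. Hence every finite point w \<noteq> z_0 either reaches the circle |z| = 1/2,
  which is B(F), or lands in the open disc, or escapes to a neighbourhood of \<infinity> that never
  returns; in the last two cases a whole neighbourhood of w avoids the preimages of B(F).
  Pulling a point of the circle back along f_2 produces preimages of B(F) accumulating at z_0,
  which itself never reaches B(F). So \<alpha>(F) = {z_0}, and F is \<alpha>-expanding with N = 1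
  because |f_2'| = 10/9.\<close>

lemma topspace_sphere_top [simp]: "topspace sphere_top = UNIV"
  using openin_subset[of sphere_top UNIV] by (auto simp: openin_sphere_top sphere_open_def)

lemma Some_in_image_Some_iff [simp]: "Some z \<in> Some ` S \<longleftrightarrow> z \<in> S"
  by auto

lemma open_vimage_Some: "openin sphere_top U \<Longrightarrow> open {z. Some z \<in> U}"
  by (simp add: openin_sphere_top sphere_open_def)

lemma openin_sphere_top_image_Some: "open S \<Longrightarrow> openin sphere_top (Some ` S)"
  by (simp add: openin_sphere_top sphere_open_def image_iff)

lemma closedin_sphere_top_image_Some:
  assumes "closed S" "bounded S"
  shows "closedin sphere_top (Some ` S)"
proof -
  obtain b where b: "\<And>z. z \<in> S \<Longrightarrow> norm z \<le> b"
    using assms(2) bounded_iff by blast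
  have "{z. Some z \<in> UNIV - Some ` S} = - S" by auto
  moreover have "b < norm z \<Longrightarrow> Some z \<in> UNIV - Some ` S" for z
    using b by force
  ultimately have "sphere_open (UNIV - Some ` S)"
    unfolding sphere_open_def using assms(1) by (metis open_Compl)
  then show ?thesis by (simp add: closedin_def openin_sphere_top)
qed

lemma continuous_map_Some: "continuous_map euclidean sphere_top Some"
  unfolding continuous_map_def by (simp add: open_vimage_Some)

lemma sphere_closure_of_image_Some:
  assumes "bounded S"
  shows "sphere_top closure_of (Some ` S) = Some ` closure S"
proof
  show "sphere_top closure_of (Some ` S) \<subseteq> Some ` closure S"
    using assms by (intro closure_of_minimal closedin_sphere_top_image_Some image_mono closure_subset)
      auto
  show "Some ` closure S \<subseteq> sphere_top closure_of (Some ` S)"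
    using continuous_map_image_closure_subset[OF continuous_map_Some] by simp
qed

lemma clopen_in_connected_components_of:
  assumes "connectedin X C" "C \<noteq> {}" "openin X C" "closedin X C"
  shows "C \<in> connected_components_of X"
proof -
  have "X \<noteq> trivial_topology"
    using assms(1,2) connectedin_subset_topspace by force
  then obtain K where K: "K \<in> connected_components_of X" "C \<subseteq> K"
    using exists_connected_component_of_superset assms(1) by blast
  moreover have "K \<subseteq> C \<or> disjnt K C"
    using connectedin_clopen_cases[OF connectedin_connected_components_of[OF K(1)] assms(4,3)] .
  ultimately show ?thesis using assms(2) by (auto simp: disjnt_def)
qed


lemma pmt_iter_Suc':
  "pmt_iter F (Suc n) z = (case pmt_step F z of None \<Rightarrow> None | Some w \<Rightarrow> pmt_iter F n w)"
proof (induction n arbitrary: z)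
  case (Suc n)
  show ?case
    by (subst pmt_iter.simps(2), subst Suc.IH) (simp split: option.split)
qed (simp split: option.split)

lemma periodic_point_1_iff: "periodic_point F z 1 \<longleftrightarrow> z \<in> pmt_R F \<and> pmt_step F z = Some z"
  unfolding periodic_point_def orbit_in_R_def by auto

lemma pmt_preim_0 [simp]: "pmt_preim F 0 A = A"
  by (simp add: pmt_preim_def)

lemma pmt_preim_Suc:
  "z \<in> pmt_preim F (Suc n) A \<longleftrightarrow> (\<exists>w. pmt_step F z = Some w \<and> w \<in> pmt_preim F n A)"
  by (auto simp: pmt_preim_def pmt_iter_Suc' simp del: pmt_iter.simps(2) split: option.split)

definition boundary_preimages :: "pmt \<Rightarrow> sphere set" where
  "boundary_preimages F = (\<Union>n. pmt_preim F n (pmt_B F))"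

lemma pmt_alpha_eq: "pmt_alpha F = sphere_top closure_of boundary_preimages F - boundary_preimages F"
  unfolding pmt_alpha_def pmt_calB_def boundary_preimages_def ..

lemma regular_set_eq: "regular_set F = UNIV - sphere_top closure_of boundary_preimages F"
  unfolding regular_set_def pmt_calB_def boundary_preimages_def ..

lemma boundary_preimages_iff:
  "z \<in> boundary_preimages F \<longleftrightarrow>
     z \<in> pmt_B F \<or> (\<exists>w. pmt_step F z = Some w \<and> w \<in> boundary_preimages F)"
proof -
  have "(\<exists>n. z \<in> pmt_preim F n (pmt_B F)) \<longleftrightarrow>
        z \<in> pmt_preim F 0 (pmt_B F) \<or> (\<exists>n. z \<in> pmt_preim F (Suc n) (pmt_B F))"
    by (metis not0_implies_Suc)
  then show ?thesis
    unfolding boundary_preimages_def pmt_preim_Suc by auto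
qed

lemma boundary_preimages_disjoint_invariant:
  assumes "S \<inter> pmt_B F = {}" and "\<And>z. z \<in> S \<Longrightarrow> \<exists>w\<in>S. pmt_step F z = Some w"
  shows "S \<inter> boundary_preimages F = {}"
proof -
  have "z \<notin> pmt_preim F n (pmt_B F)" if "z \<in> S" for n z
    using that
  proof (induction n arbitrary: z)
    case 0
    then show ?case using assms(1) by auto
  next
    case (Suc n)
    then show ?case using assms(2) by (fastforce simp: pmt_preim_Suc)
  qed
  then show ?thesis unfolding boundary_preimages_def by blast
qed

lemma moeb_comp_moeb_id [simp]: "moeb_comp M moeb_id = M"
  by (cases M) (simp add: moeb_id_def)

lemma moeb_loc_deriv_Some:
  assumes "c * z + d \<noteq> 0"
  shows "moeb_loc_deriv (a, b, c, d) (Some z) = (a * d - b * c) / (c * z + d)\<^sup>2"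
proof -
  have "((\<lambda>w. (a * w + b) / (c * w + d)) has_field_derivative (a * d - b * c) / (c * z + d)\<^sup>2) (at z)"
    using assms by (auto intro!: derivative_eq_intros simp: field_simps power2_eq_square)
  then show ?thesis using assms by (simp add: DERIV_imp_deriv)
qed

lemma sph_deriv_fixed_point:
  assumes "moeb_app M (Some z) = Some z"
  shows "sph_deriv M (Some z) = norm (moeb_loc_deriv M (Some z))"
proof -
  have "1 + (norm z)\<^sup>2 \<noteq> 0" by (metis add_pos_nonneg zero_less_one zero_le_power2 less_irrefl)
  then show ?thesis using assms by (simp add: sph_deriv_def)
qed

lemma moeb_elliptic_rotation:
  assumes "norm a = 1" and "a \<noteq> 1"
  shows "moeb_elliptic (a, 0, 0, 1)"
proof -
  have "a \<noteq> 0" using assms(1) by auto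
  have "(a + 1)\<^sup>2 / a = a + 2 + inverse a"
    using \<open>a \<noteq> 0\<close> by (simp add: field_simps power2_eq_square)
  also have "inverse a = cnj a"
    using assms(1) by (simp add: complex_norm_square divide_conv_cnj inverse_eq_divide)
  also have "a + 2 + cnj a = complex_of_real (2 + 2 * Re a)"
    by (simp add: complex_eq_iff)
  finally have trace: "(a + 1)\<^sup>2 / a = complex_of_real (2 + 2 * Re a)" .
  have "\<bar>Re a\<bar> \<le> 1" using abs_Re_le_cmod[of a] assms(1) by simp
  moreover have "Re a \<noteq> 1"
  proof
    assume "Re a = 1"
    then have "Im a = 0" using assms(1) by (simp add: cmod_def)
    then show False using \<open>Re a = 1\<close> assms(2) by (simp add: complex_eq_iff)
  qed
  ultimately show ?thesis
    using trace \<open>a \<noteq> 0\<close> by (intro moeb_elliptic.simps[THEN iffD2] conjI exI[of _ "2 + 2 * Re a"]) auto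
qed

lemma not_identity_type_if_affine:
  assumes "open V" "z \<in> V" "a \<noteq> 1"
    and iter: "\<And>w. w \<in> V \<Longrightarrow> pmt_iter F n (Some w) = Some (Some (a * w + b))"
  shows "\<not> identity_type F (Some z) n"
proof
  assume "identity_type F (Some z) n"
  then obtain U where U: "openin sphere_top U" "Some z \<in> U" "\<forall>w\<in>U. pmt_iter F n w = Some w"
    unfolding identity_type_def by blast
  define W where "W = {w. Some w \<in> U} \<inter> V"
  have "open W" unfolding W_def using U(1) assms(1) by (simp add: open_vimage_Some open_Int)
  have "W \<subseteq> {b / (1 - a)}"
  proof
    fix w assume "w \<in> W"
    then have "a * w + b = w" using U(3) iter unfolding W_def by fastforce
    then show "w \<in> {b / (1 - a)}" using assms(3) by (simp add: field_simps)
  qed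
  moreover have "z \<in> W" unfolding W_def using U(2) assms(2) by simp
  ultimately have "W = {z}" by blast
  then show False using \<open>open W\<close> not_open_singleton by metis
qed

section \<open>Dynamics of the example\<close>

lemma ex_omega_eq: "ex_omega = Complex (-1/2) (sqrt 3/2)"
  unfolding ex_omega_def by (simp add: exp_eq_polar cis.ctr cos_120' sin_120' Complex_eq mult.commute)

lemma norm_ex_omega [simp]: "norm ex_omega = 1"
  unfolding ex_omega_eq by (simp add: cmod_def power_divide)

lemma ex_omega_neq_1: "ex_omega \<noteq> 1"
  unfolding ex_omega_eq by (simp add: complex_eq_iff)

lemma norm_ex_lambda [simp]: "norm ex_lambda = 10/9"
  unfolding ex_lambda_def ex_omega_def[symmetric] by (simp add: norm_mult)

lemma ex_lambda_neq_0: "ex_lambda \<noteq> 0"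
proof -
  have "norm ex_lambda \<noteq> norm (0 :: complex)" by simp
  then show ?thesis by metis
qed

lemma ex_lambda_neq_minus_1: "ex_lambda \<noteq> -1"
proof -
  have "norm ex_lambda \<noteq> norm (-1 :: complex)" by simp
  then show ?thesis by metis
qed

lemma ex_lambda_plus_1_neq_0: "ex_lambda + 1 \<noteq> 0"
  using ex_lambda_neq_minus_1 eq_neg_iff_add_eq_0 by metis

definition ex_z0 :: complex where "ex_z0 = ex_lambda / (ex_lambda + 1)"

definition ex_f2 :: "complex \<Rightarrow> complex" where "ex_f2 z = ex_lambda * (1 - z)"

lemma ex_f2_minus_z0: "ex_f2 z - ex_z0 = - ex_lambda * (z - ex_z0)"
  unfolding ex_f2_def ex_z0_def using ex_lambda_plus_1_neq_0 by (simp add: field_simps)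

lemma ex_f2_z0 [simp]: "ex_f2 ex_z0 = ex_z0"
  using ex_f2_minus_z0[of ex_z0] by simp

lemma isCont_ex_f2: "isCont ex_f2 z"
  unfolding ex_f2_def[abs_def] by (intro continuous_intros)

lemma funpow_ex_f2_minus_z0: "(ex_f2 ^^ m) z - ex_z0 = (- ex_lambda) ^ m * (z - ex_z0)"
  by (induction m) (simp_all add: ex_f2_minus_z0)

lemma norm_ex_z0: "1/2 < norm ex_z0"
proof -
  have "norm (ex_lambda + 1) \<le> 19/9" using norm_triangle_ineq[of ex_lambda 1] by simp
  moreover have "0 < norm (ex_lambda + 1)" using ex_lambda_plus_1_neq_0 by simp
  ultimately show ?thesis unfolding ex_z0_def norm_divide by (simp add: field_simps)
qed

lemma ex_R1_eq: "ex_R1 = Some ` ball 0 (1/2)"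
  unfolding ex_R1_def by auto

lemma openin_ex_R1: "openin sphere_top ex_R1"
  unfolding ex_R1_eq by (simp add: openin_sphere_top_image_Some)

lemma sphere_closure_of_ex_R1: "sphere_top closure_of ex_R1 = Some ` cball 0 (1/2)"
  unfolding ex_R1_eq by (simp add: sphere_closure_of_image_Some)

lemma ex_R2_eq: "ex_R2 = insert None (Some ` (- cball 0 (1/2)))"
  unfolding ex_R2_def sphere_closure_of_ex_R1 by (auto intro: option.exhaust)

lemma pmt_B_ex_F: "pmt_B ex_F = Some ` sphere 0 (1/2)"
proof -
  have closed: "closedin sphere_top (Some ` cball 0 (1/2))"
    by (simp add: closedin_sphere_top_image_Some)
  have "sphere_top frontier_of ex_R1 = Some ` cball 0 (1/2) - ex_R1"
    unfolding frontier_of_def sphere_closure_of_ex_R1 interior_of_openin[OF openin_ex_R1] ..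
  also have "\<dots> = Some ` sphere 0 (1/2)" unfolding ex_R1_eq by auto
  finally have frontier_R1: "sphere_top frontier_of ex_R1 = Some ` sphere 0 (1/2)" .
  have "ex_R1 \<subseteq> sphere_top interior_of Some ` cball 0 (1/2)"
    using openin_ex_R1 by (intro interior_of_maximal) (auto simp: ex_R1_eq)
  moreover have "sphere_top frontier_of ex_R2 = sphere_top frontier_of Some ` cball 0 (1/2)"
    using frontier_of_complement[of sphere_top] by (simp add: ex_R2_def sphere_closure_of_ex_R1)
  ultimately have "sphere_top frontier_of ex_R2 \<subseteq> Some ` cball 0 (1/2) - ex_R1"
    unfolding frontier_of_def closure_of_closedin[OF closed] by blast
  also have "\<dots> = Some ` sphere 0 (1/2)" unfolding ex_R1_eq by auto
  finally have "sphere_top frontier_of ex_R2 \<subseteq> Some ` sphere 0 (1/2)" .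
  moreover have "pmt_B ex_F = sphere_top frontier_of ex_R1 \<union> sphere_top frontier_of ex_R2"
    unfolding pmt_B_def ex_F_def by (auto simp: less_Suc_eq)
  ultimately show ?thesis using frontier_R1 by blast
qed

lemma pmt_R_ex_F: "pmt_R ex_F = ex_R1 \<union> ex_R2"
  unfolding pmt_R_def ex_F_def by (auto simp: less_Suc_eq)

lemma pmt_map_ex_F_R1: "norm z < 1/2 \<Longrightarrow> pmt_map ex_F (Some z) = (ex_omega, 0, 0, 1)"
  unfolding pmt_map_def pmt_idx_def
  by (subst the_equality[of _ 0]) (auto simp: ex_F_def less_Suc_eq ex_R1_eq ex_R2_eq)

lemma pmt_map_ex_F_R2: "p \<in> ex_R2 \<Longrightarrow> pmt_map ex_F p = (- ex_lambda, ex_lambda, 0, 1)"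
  unfolding pmt_map_def pmt_idx_def
  by (subst the_equality[of _ 1]) (auto simp: ex_F_def less_Suc_eq ex_R1_eq ex_R2_eq)

lemma ex_F_step_R1: "norm z < 1/2 \<Longrightarrow> pmt_step ex_F (Some z) = Some (Some (ex_omega * z))"
  by (simp add: pmt_step_def pmt_R_ex_F pmt_map_ex_F_R1 ex_R1_eq)

lemma ex_F_step_R2: "1/2 < norm z \<Longrightarrow> pmt_step ex_F (Some z) = Some (Some (ex_f2 z))"
  by (simp add: pmt_step_def pmt_R_ex_F pmt_map_ex_F_R2 ex_R2_eq ex_f2_def algebra_simps)

lemma ex_F_step_None: "pmt_step ex_F None = Some None"
  by (simp add: pmt_step_def pmt_R_ex_F pmt_map_ex_F_R2 ex_R2_eq)

section \<open>The exceptional set\<close>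

lemma ex_R1_disjoint_boundary_preimages: "ex_R1 \<inter> boundary_preimages ex_F = {}"
  by (rule boundary_preimages_disjoint_invariant)
    (auto simp: pmt_B_ex_F ex_R1_eq ex_F_step_R1 norm_mult)

definition ex_far :: "sphere set" where
  "ex_far = insert None (Some ` {z. norm ex_z0 + 1 < norm (z - ex_z0)})"

lemma openin_ex_far: "openin sphere_top ex_far"
proof -
  have "open {z. norm ex_z0 + 1 < norm (z - ex_z0)}"
    by (intro open_Collect_less continuous_intros)
  moreover have "norm ex_z0 + 1 < norm (z - ex_z0)" if "2 * norm ex_z0 + 1 < norm z" for z
    using that norm_triangle_ineq2[of z ex_z0] by linarith
  ultimately show ?thesis
    unfolding openin_sphere_top sphere_open_def ex_far_def
    by (auto intro!: exI[of _ "2 * norm ex_z0 + 1"])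
qed

lemma ex_far_disjoint_boundary_preimages: "ex_far \<inter> boundary_preimages ex_F = {}"
proof (rule boundary_preimages_disjoint_invariant)
  have far_gt_1: "1 < norm z" if "norm ex_z0 + 1 < norm (z - ex_z0)" for z
    using that norm_triangle_ineq4[of z ex_z0] by linarith
  then show "ex_far \<inter> pmt_B ex_F = {}"
    by (force simp: ex_far_def pmt_B_ex_F)
  fix p assume "p \<in> ex_far"
  then consider "p = None" | z where "p = Some z" "norm ex_z0 + 1 < norm (z - ex_z0)"
    unfolding ex_far_def by blast
  then show "\<exists>q\<in>ex_far. pmt_step ex_F p = Some q"
  proof cases
    case 1
    then show ?thesis by (simp add: ex_F_step_None ex_far_def)
  next
    case (2 z)
    have "norm (ex_f2 z - ex_z0) = 10/9 * norm (z - ex_z0)"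
      by (simp add: ex_f2_minus_z0 norm_mult)
    then have "norm ex_z0 + 1 < norm (ex_f2 z - ex_z0)" using 2(2) norm_ge_zero[of ex_z0] by linarith
    moreover have "1/2 < norm z" using far_gt_1[OF 2(2)] by simp
    ultimately show ?thesis using 2(1) by (simp add: ex_F_step_R2 ex_far_def)
  qed
qed

lemma ex_z0_notin_boundary_preimages: "Some ex_z0 \<notin> boundary_preimages ex_F"
proof -
  have "{Some ex_z0} \<inter> boundary_preimages ex_F = {}"
    using norm_ex_z0 by (intro boundary_preimages_disjoint_invariant) (auto simp: pmt_B_ex_F ex_F_step_R2)
  then show ?thesis by blast
qed

lemma ex_F_notin_closure_step:
  assumes "1/2 < norm w" and "Some (ex_f2 w) \<notin> sphere_top closure_of boundary_preimages ex_F"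
  shows "Some w \<notin> sphere_top closure_of boundary_preimages ex_F"
proof -
  obtain T where T: "openin sphere_top T" "Some (ex_f2 w) \<in> T" "T \<inter> boundary_preimages ex_F = {}"
    using assms(2) unfolding in_closure_of by auto
  define V where "V = {y. 1/2 < norm y} \<inter> ex_f2 -` {z. Some z \<in> T}"
  have "open V" unfolding V_def
    using T(1) isCont_ex_f2
    by (intro open_Int open_Collect_less continuous_open_vimage open_vimage_Some continuous_intros) auto
  have "Some ` V \<inter> boundary_preimages ex_F = {}"
  proof -
    have "Some y \<notin> boundary_preimages ex_F" if "y \<in> V" for y
      using that T(3) by (subst boundary_preimages_iff) (auto simp: V_def pmt_B_ex_F ex_F_step_R2)
    then show ?thesis by blast
  qed
  moreover have "Some w \<in> Some ` V" using assms(1) T(2) by (simp add: V_def)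
  ultimately show ?thesis
    using openin_Int_closure_of_eq_empty[OF openin_sphere_top_image_Some[OF \<open>open V\<close>]] by blast
qed

lemma ex_F_escaping_notin_closure:
  assumes "Some w \<notin> boundary_preimages ex_F"
    and "norm ex_z0 + 1 < norm ((ex_f2 ^^ m) w - ex_z0)"
  shows "Some w \<notin> sphere_top closure_of boundary_preimages ex_F"
  using assms
proof (induction m arbitrary: w)
  case 0
  then have "Some w \<in> ex_far" by (simp add: ex_far_def)
  then show ?case
    using ex_far_disjoint_boundary_preimages openin_Int_closure_of_eq_empty[OF openin_ex_far] by blast
next
  case (Suc m)
  consider "norm w < 1/2" | "norm w = 1/2" | "1/2 < norm w" by linarith
  then show ?case
  proof cases
    case 1
    then have "Some w \<in> ex_R1" by (simp add: ex_R1_eq)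
    then show ?thesis
      using ex_R1_disjoint_boundary_preimages openin_Int_closure_of_eq_empty[OF openin_ex_R1] by blast
  next
    case 2
    then have "Some w \<in> boundary_preimages ex_F" by (subst boundary_preimages_iff) (simp add: pmt_B_ex_F)
    then show ?thesis using Suc.prems(1) by blast
  next
    case 3
    have "Some (ex_f2 w) \<notin> boundary_preimages ex_F"
      using Suc.prems(1) 3 boundary_preimages_iff[of "Some w"] by (simp add: ex_F_step_R2)
    moreover have "norm ex_z0 + 1 < norm ((ex_f2 ^^ m) (ex_f2 w) - ex_z0)"
      using Suc.prems(2) by (simp add: funpow_Suc_right del: funpow.simps)
    ultimately show ?thesis using Suc.IH 3 ex_F_notin_closure_step by blast
  qed
qed

lemma ex_f2_escapes: "w \<noteq> ex_z0 \<Longrightarrow> \<exists>m. r < norm ((ex_f2 ^^ m) w - ex_z0)"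
proof -
  assume "w \<noteq> ex_z0"
  then have pos: "0 < norm (w - ex_z0)" by simp
  obtain m where m: "r / norm (w - ex_z0) < (10/9 :: real) ^ m"
    using real_arch_pow[of "10/9"] by auto
  then have "r < (10/9) ^ m * norm (w - ex_z0)"
    using pos by (simp add: pos_divide_less_eq)
  also have "\<dots> = norm ((ex_f2 ^^ m) w - ex_z0)"
    by (simp add: funpow_ex_f2_minus_z0 norm_mult norm_power)
  finally show ?thesis ..
qed

lemma ex_z0_in_closure: "Some ex_z0 \<in> sphere_top closure_of boundary_preimages ex_F"
proof -
  define s where "s = 1 - 1 / (2 * norm ex_z0)"
  have s: "0 < s" "s < 1" "norm ex_z0 * (1 - s) = 1/2"
    using norm_ex_z0 by (auto simp: s_def divide_less_eq)
  define q where "q = inverse (- ex_lambda)"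
  have norm_q: "norm q = 9/10" by (simp add: q_def norm_inverse)
  have lambda_q: "- ex_lambda * q = 1"
    using ex_lambda_neq_0 by (simp add: q_def)
  \<comment> \<open>the backward f_2-orbit of the point h 0 where the segment from 0 to z_0 meets the circle\<close>
  define h where "h k = ex_z0 - (s * ex_z0) * q ^ k" for k
  have norm_h: "norm (h k) = norm ex_z0 * norm (1 - s * q ^ k)" for k
    by (simp add: h_def norm_mult[symmetric] algebra_simps)
  have "norm (1 - complex_of_real s) = 1 - s"
    using s(2) by (metis abs_of_pos diff_gt_0_iff_gt norm_of_real of_real_1 of_real_diff)
  then have h_0: "norm (h 0) = 1/2"
    using s(3) by (simp add: norm_h)
  have h_Suc: "1/2 < norm (h (Suc k))" for k
  proof -
    have "norm q ^ Suc k < 1"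
      unfolding norm_q by (intro power_Suc_less_one) auto
    then have "norm (s * q ^ Suc k) < s"
      using s(1) by (simp add: norm_mult norm_power)
    then have "1 - s < norm (1 - s * q ^ Suc k)"
      using norm_triangle_ineq2[of 1 "s * q ^ Suc k"] by simp
    then have "norm ex_z0 * (1 - s) < norm ex_z0 * norm (1 - s * q ^ Suc k)"
      using norm_ex_z0 by (intro mult_strict_left_mono) auto
    then show ?thesis
      unfolding norm_h using s(3) by linarith
  qed
  have g_h: "ex_f2 (h (Suc k)) = h k" for k
  proof -
    have "ex_f2 (h (Suc k)) - ex_z0 = - (s * ex_z0) * q ^ k * (- ex_lambda * q)"
      by (simp add: ex_f2_minus_z0 h_def algebra_simps)
    also have "\<dots> = h k - ex_z0"
      using lambda_q by (simp add: h_def)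
    finally show ?thesis by simp
  qed
  have h_in: "Some (h k) \<in> boundary_preimages ex_F" for k
  proof (induction k)
    case 0
    then show ?case using h_0 by (subst boundary_preimages_iff) (simp add: pmt_B_ex_F)
  next
    case (Suc k)
    then show ?case
      using h_Suc[of k] by (subst boundary_preimages_iff) (simp add: ex_F_step_R2 g_h)
  qed
  have "h \<longlonglongrightarrow> ex_z0 - (s * ex_z0) * 0"
    unfolding h_def using norm_q by (intro tendsto_intros LIMSEQ_power_zero) simp
  then have "ex_z0 \<in> closure (range h)"
    by (auto simp: closure_sequential)
  then have "Some ex_z0 \<in> sphere_top closure_of (Some ` range h)"
    using continuous_map_image_closure_subset[OF continuous_map_Some, of "range h"] by auto
  moreover have "Some ` range h \<subseteq> boundary_preimages ex_F" using h_in by auto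
  ultimately show ?thesis using closure_of_mono by blast
qed

lemma pmt_alpha_ex_F: "pmt_alpha ex_F = {Some ex_z0}"
proof -
  have "x = Some ex_z0"
    if x: "x \<in> sphere_top closure_of boundary_preimages ex_F" "x \<notin> boundary_preimages ex_F" for x
  proof (cases x)
    case None
    then have "x \<in> ex_far" by (simp add: ex_far_def)
    then show ?thesis
      using x ex_far_disjoint_boundary_preimages openin_Int_closure_of_eq_empty[OF openin_ex_far] by blast
  next
    case (Some w)
    show ?thesis
    proof (rule ccontr)
      assume "x \<noteq> Some ex_z0"
      then obtain m where "norm ex_z0 + 1 < norm ((ex_f2 ^^ m) w - ex_z0)"
        using ex_f2_escapes Some by blast
      then show False using ex_F_escaping_notin_closure x Some by blast
    qed
  qed
  then show ?thesis
    unfolding pmt_alpha_eq using ex_z0_in_closure ex_z0_notin_boundary_preimages by blast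
qed

section \<open>Fixed points and the rotation domain\<close>

lemma ex_R1_regular_component: "ex_R1 \<in> regular_components ex_F"
proof -
  let ?P = "boundary_preimages ex_F"
  have circle: "Some z \<in> sphere_top closure_of ?P" if "norm z = 1/2" for z
    using that closure_of_subset[of ?P sphere_top] boundary_preimages_iff[of "Some z" ex_F]
    by (auto simp: pmt_B_ex_F)
  have R1_regular: "ex_R1 \<subseteq> regular_set ex_F"
    using ex_R1_disjoint_boundary_preimages openin_Int_closure_of_eq_empty[OF openin_ex_R1]
    by (auto simp: regular_set_eq)
  have "Some ` cball 0 (1/2) \<inter> regular_set ex_F \<subseteq> ex_R1"
  proof clarify
    fix z assume "z \<in> cball 0 (1/2)" "Some z \<in> regular_set ex_F"
    then show "Some z \<in> ex_R1"
      using circle[of z] by (cases "norm z = 1/2") (auto simp: regular_set_eq ex_R1_eq)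
  qed
  then have "ex_R1 = sphere_top closure_of ex_R1 \<inter> regular_set ex_F"
    using R1_regular closure_of_subset[of ex_R1 sphere_top] by (auto simp: sphere_closure_of_ex_R1)
  then have "closedin (subtopology sphere_top (regular_set ex_F)) ex_R1"
    unfolding closedin_subtopology by (metis closedin_closure_of)
  moreover have "openin (subtopology sphere_top (regular_set ex_F)) ex_R1"
    using openin_ex_R1 R1_regular by (auto simp: openin_subtopology intro!: exI[of _ ex_R1])
  moreover have "connectedin sphere_top ex_R1"
    unfolding ex_R1_eq by (intro connectedin_continuous_map_image[OF continuous_map_Some]) simp
  then have "connectedin (subtopology sphere_top (regular_set ex_F)) ex_R1"
    using R1_regular by (simp add: connectedin_subtopology)
  ultimately show ?thesis
    unfolding regular_components_def by (intro clopen_in_connected_components_of) (auto simp: ex_R1_eq)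
qed

lemma ex_F_rotation_domain: "rotation_domain ex_F ex_R1"
  unfolding rotation_domain_def
proof (intro conjI ex_R1_regular_component exI[of _ 1] exI[of _ "(ex_omega, 0, 0, 1)"]
    moeb_elliptic_rotation norm_ex_omega ex_omega_neq_1 ballI)
  show "pmt_img ex_F 1 ex_R1 \<subseteq> ex_R1"
    by (auto simp: pmt_img_def ex_R1_eq ex_F_step_R1 norm_mult)
  show "pmt_iter ex_F 1 z = Some (moeb_app (ex_omega, 0, 0, 1) z)" if "z \<in> ex_R1" for z
    using that by (auto simp: ex_R1_eq ex_F_step_R1)
qed auto

lemma ex_F_elliptic_0: "elliptic_pp ex_F (Some 0) 1"
proof -
  have "\<not> identity_type ex_F (Some 0) 1"
    using ex_omega_neq_1
    by (intro not_identity_type_if_affine[where V = "ball 0 (1/2)" and b = 0]) (auto simp: ex_F_step_R1)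
  moreover have "pp_multiplier ex_F (Some 0) 1 = ex_omega"
    by (simp add: pp_multiplier_def moeb_multiplier_def pmt_map_ex_F_R1 moeb_loc_deriv_Some)
  ultimately show ?thesis
    unfolding elliptic_pp_def periodic_point_1_iff using ex_omega_neq_1
    by (simp add: pmt_R_ex_F ex_R1_eq ex_F_step_R1)
qed

lemma ex_F_repelling_z0: "repelling_pp ex_F (Some ex_z0) 1"
proof -
  have "\<not> identity_type ex_F (Some ex_z0) 1"
  proof (rule not_identity_type_if_affine
      [where V = "{z. 1/2 < norm z}" and a = "- ex_lambda" and b = ex_lambda])
    show "open {z :: complex. 1/2 < norm z}"
      by (intro open_Collect_less continuous_intros)
    show "ex_z0 \<in> {z. 1/2 < norm z}"
      using norm_ex_z0 by simp
    show "- ex_lambda \<noteq> 1"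
      using ex_lambda_neq_minus_1 by (metis minus_minus)
    show "pmt_iter ex_F 1 (Some w) = Some (Some (- ex_lambda * w + ex_lambda))"
      if "w \<in> {z. 1/2 < norm z}" for w
      using that by (simp add: ex_F_step_R2 ex_f2_def algebra_simps)
  qed
  moreover have "pp_multiplier ex_F (Some ex_z0) 1 = - ex_lambda"
    using norm_ex_z0
    by (simp add: pp_multiplier_def moeb_multiplier_def pmt_map_ex_F_R2 ex_R2_eq moeb_loc_deriv_Some)
  ultimately show ?thesis
    unfolding repelling_pp_def periodic_point_1_iff using norm_ex_z0
    by (simp add: pmt_R_ex_F ex_R2_eq ex_F_step_R2)
qed

lemma ex_F_alpha_expanding: "alpha_expanding ex_F"
proof -
  have "moeb_app (- ex_lambda, ex_lambda, 0, 1) (Some ex_z0) = Some ex_z0"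
    using ex_f2_z0 by (simp add: ex_f2_def algebra_simps)
  then have "sph_deriv (pmt_orbit_moeb ex_F 1 (Some ex_z0)) (Some ex_z0) = 10/9"
    using norm_ex_z0
    by (simp add: pmt_map_ex_F_R2 ex_R2_eq sph_deriv_fixed_point moeb_loc_deriv_Some)
  then show ?thesis
    unfolding alpha_expanding_def pmt_alpha_ex_F by auto
qed

theorem mainTheorem6:
  shows "elliptic_pp ex_F (Some 0) 1 \<and> rotation_domain ex_F ex_R1 \<and>
         repelling_pp ex_F (Some (ex_lambda / (ex_lambda + 1))) 1 \<and>
         pmt_alpha ex_F = {Some (ex_lambda / (ex_lambda + 1))} \<and>
         alpha_expanding ex_F \<and> \<not> pmt_hyperbolic ex_F"
proof -
  have "\<not> pmt_hyperbolic ex_F"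
    using ex_F_elliptic_0 unfolding pmt_hyperbolic_def by blast
  then show ?thesis
    using ex_F_elliptic_0 ex_F_rotation_domain ex_F_repelling_z0 pmt_alpha_ex_F ex_F_alpha_expanding
    unfolding ex_z0_def by blast
qed

end
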